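(* Let $\{(\mathbf{x}_i,y_i)\}_{i=1}^N$, $\mathbf{x}_i\in\mathbb{R}^n$, $y_i\in\{-1,1\}$, be linearly separable through the origin with margin $\gamma$ (there is a unit $\mathbf{w}_s$ with $y_i\mathbf{w}_s^T\mathbf{x}_i>\gamma/2$ for all $i$) and satisfy $\|\mathbf{x}_i\|<R$ for all $i$. Train a linear model without bias, $\mathcal{L}(\mathbf{w})=\sum_{i=1}^N l(y_i\mathbf{w}^T\mathbf{x}_i)$ with $l$ the logistic loss, by gradient descent $\mathbf{w}(t+1)=\mathbf{w}(t)-\eta\nabla\mathcal{L}(\mathbf{w}(t))$, and let $\hat{\mathbf{w}}=\arg\min\|\mathbf{w}\|^2$ s.t. $y_i\mathbf{w}^T\mathbf{x}_i\ge1$ for all $i$. Suppose $\mathbf{w}(t)=\hat{\mathbf{w}}\log t+\boldsymbol\rho(t)$ with $\|\boldsymbol\rho(t)\|\le B$. Let $c(t)=\frac{\mathbf{w}(t)^T\hat{\mathbf{w}}}{\|\mathbf{w}(t)\|\|\hat{\mathbf{w}}\|}=\cos\theta(t)$. Then at each gradient step $$c(t+1)\le c(t)+\frac{\eta NRe^{BR}B\gamma}{2t\log t\,\|\mathbf{w}(t)\|}+\frac{3\eta NRe^{BR}B^2\gamma^2}{8t\log^2t\,\|\mathbf{w}(t)\|}+\mathcal{O}\left(\frac{1}{t^2\|\mathbf{w}(t)\|^2}\right).$$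
   Context: $\theta(t)$ is the angle between $\mathbf{w}(t)$ and $\hat{\mathbf{w}}$; $t$ counts gradient descent steps (epochs). *)

theory Defs
  imports "HOL-Analysis.Analysis"
begin

definition logistic_loss :: "real \<Rightarrow> real" where
  "logistic_loss u = ln (1 + exp (- u))"

definition emp_loss :: "nat \<Rightarrow> (nat \<Rightarrow> real ^ 'n) \<Rightarrow> (nat \<Rightarrow> real) \<Rightarrow> real ^ 'n \<Rightarrow> real" where
  "emp_loss N x y w = (\<Sum>i<N. logistic_loss (y i * (w \<bullet> x i)))"

definition is_max_margin :: "nat \<Rightarrow> (nat \<Rightarrow> real ^ 'n) \<Rightarrow> (nat \<Rightarrow> real) \<Rightarrow> real ^ 'n \<Rightarrow> bool" where
  "is_max_margin N x y wh \<longleftrightarrow>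
     (\<forall>i<N. y i * (wh \<bullet> x i) \<ge> 1) \<and>
     (\<forall>v. (\<forall>i<N. y i * (v \<bullet> x i) \<ge> 1) \<longrightarrow> (norm wh)\<^sup>2 \<le> (norm v)\<^sup>2)"

definition cos_angle :: "real ^ 'n \<Rightarrow> real ^ 'n \<Rightarrow> real" where
  "cos_angle u v = (u \<bullet> v) / (norm u * norm v)"

end

theory Submission
  imports Defs
begin

(* Put z_i = y_i x_i and write w(t) = ln t * wh + rho(t).  Since t * exp (- w(t).z_i) =
   t^(1 - wh.z_i) * exp (- rho(t).z_i), a gradient step moves rho, up to O(1/t^2), by a gradient
   step of length 1/t on the convex potential
     Phi_t(r) = eta * sum_i t^(1 - wh.z_i) * exp (- r.z_i) + wh.r,
   which does not increase with t because wh.z_i >= 1, and is bounded below on the ball of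
   radius B.  Hence sum_t |grad Phi_t(rho(t))|^2 / t converges; as this gradient moves by O(1/t)
   per step, it tends to 0, i.e. t (w(t+1) - w(t)) tends to wh.  The step is thus asymptotically
   parallel to wh: its component along wh raises the cosine only to second order in the angle,
   which is O(B / ln t), and the remaining o(1/t) raises it by o(B / (t ln t |w(t)|)).  So for
   every kappa > 0 the increase is eventually below kappa * B / (t ln t |w(t)|), and the claim
   holds with C = 0. *)

lemma exp_le_quadratic:
  fixes x :: real
  assumes "\<bar>x\<bar> \<le> 1"
  shows "exp x \<le> 1 + x + x\<^sup>2"
proof (cases "x \<ge> 0")
  case True
  then show ?thesis using exp_bound assms by auto
next
  case False
  have "exp x * (1 - x) \<le> exp x * exp (- x)"
    using exp_ge_add_one_self[of "- x"] by (intro mult_left_mono) auto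
  also have "\<dots> = 1" by (simp add: exp_minus)
  also have "1 \<le> (1 + x + x\<^sup>2) * (1 - x)"
    using False by (simp add: algebra_simps power2_eq_square mult_nonpos_nonneg)
  finally show ?thesis using False by simp
qed

lemma abs_exp_diff_le:
  fixes a b M :: real
  assumes "a \<le> M" "b \<le> M"
  shows "\<bar>exp a - exp b\<bar> \<le> exp M * \<bar>a - b\<bar>"
proof -
  have le: "exp q - exp p \<le> exp M * (q - p)" if "p \<le> q" "q \<le> M" for p q :: real
  proof -
    have "exp q * (1 + (p - q)) \<le> exp q * exp (p - q)"
      by (intro mult_left_mono exp_ge_add_one_self) simp
    then have "exp q - exp p \<le> exp q * (q - p)" by (simp add: exp_diff algebra_simps)
    also have "\<dots> \<le> exp M * (q - p)" using that by (intro mult_right_mono) auto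
    finally show ?thesis .
  qed
  show ?thesis
    using le[of a b] le[of b a] assms by (cases "a \<le> b") (auto simp: abs_if)
qed

lemma ln_add_one_diff_bounds:
  fixes t :: real
  assumes "t > 0"
  shows "1 / (t + 1) \<le> ln (t + 1) - ln t" "ln (t + 1) - ln t \<le> 1 / t"
proof -
  have "1 + 1 / t = (t + 1) / t" using assms by (simp add: field_simps)
  then have "ln (t + 1) - ln t = ln (1 + 1 / t)" using assms by (simp add: ln_div)
  also have "\<dots> \<le> 1 / t" using assms by (intro ln_add_one_self_le_self) auto
  finally show "ln (t + 1) - ln t \<le> 1 / t" .
  have "ln (t / (t + 1)) \<le> t / (t + 1) - 1" using assms by (intro ln_le_minus_one) auto
  then show "1 / (t + 1) \<le> ln (t + 1) - ln t"
    using assms by (simp add: ln_div field_simps)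
qed

lemma logistic_tail_approx:
  fixes s :: real
  shows "\<bar>1 / (1 + exp s) - exp (- s)\<bar> \<le> (exp (- s))\<^sup>2"
proof -
  have "1 / (1 + exp s) - exp (- s) = - (exp (- s) * (1 / (1 + exp s)))"
    using add_pos_pos[OF zero_less_one exp_gt_zero, of s] by (simp add: exp_minus field_simps)
  moreover have "exp (- s) * (1 / (1 + exp s)) \<le> exp (- s) * exp (- s)"
    by (intro mult_left_mono)
      (auto simp: exp_minus inverse_eq_divide intro!: divide_left_mono mult_pos_pos add_pos_pos)
  ultimately show ?thesis by (simp add: power2_eq_square)
qed

lemma summable_if_descent:
  fixes a V :: "nat \<Rightarrow> real"
  assumes nonneg: "\<And>t. 0 \<le> a t"
    and descent: "\<And>t. t \<ge> T \<Longrightarrow> V (Suc t) \<le> V t - a t"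
    and lower: "\<And>t. t \<ge> T \<Longrightarrow> lo \<le> V t"
  shows "summable a"
proof -
  have partial: "(\<Sum>k<n. a (k + T)) \<le> V T - V (n + T)" for n
  proof (induction n)
    case (Suc n)
    then show ?case using descent[of "n + T"] by simp
  qed simp
  have "summable (\<lambda>k. a (k + T))"
  proof (rule summableI_nonneg_bounded)
    show "(\<Sum>k<n. a (k + T)) \<le> V T - lo" for n
      using partial[of n] lower[of "n + T"] by simp
  qed (rule nonneg)
  then show ?thesis by (rule summable_iff_shift[THEN iffD1])
qed

(* If |f t| >= eps, then |f| stays above eps/2 for about eps t / (2 L) steps. *)
lemma window_sum_ge_if_slowly_varying:
  fixes f :: "nat \<Rightarrow> real"
  assumes slow: "\<And>s. s \<ge> t \<Longrightarrow> \<bar>f (Suc s) - f s\<bar> \<le> L / s"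
    and t: "t \<ge> 1" and L: "L > 0" and \<epsilon>: "\<epsilon> > 0" "\<epsilon> \<le> \<bar>f t\<bar>"
  shows "\<exists>M. \<epsilon> ^ 3 / (4 * (2 * L + \<epsilon>)) \<le> (\<Sum>k<M. (f (t + k))\<^sup>2 / real (t + k))"
proof -
  have tpos: "real t > 0" using t by simp
  define M where "M = nat \<lfloor>\<epsilon> * t / (2 * L)\<rfloor>"
  have M_lower: "\<epsilon> * t / (2 * L) < real M + 1" and M_upper: "real M \<le> \<epsilon> * t / (2 * L)"
    unfolding M_def using \<epsilon> L tpos by (linarith, simp add: of_nat_nat)
  have drift: "\<epsilon> - L * k / t \<le> \<bar>f (t + k)\<bar>" for k
  proof (induction k)
    case (Suc k)
    have "\<bar>f (t + Suc k) - f (t + k)\<bar> \<le> L / (t + k)" using slow[of "t + k"] by simp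
    also have "\<dots> \<le> L / t" using L tpos by (simp add: frac_le)
    finally have "\<bar>f (t + k)\<bar> - L / t \<le> \<bar>f (t + Suc k)\<bar>" by linarith
    moreover have "\<epsilon> - L * Suc k / t = \<epsilon> - L * k / t - L / t"
      by (simp add: add_divide_distrib algebra_simps)
    ultimately show ?case using Suc by linarith
  qed (use \<epsilon> in simp)
  have term_ge: "(\<epsilon> / 2)\<^sup>2 / (t + M) \<le> (f (t + k))\<^sup>2 / (t + k)" if "k < Suc M" for k
  proof -
    have "L * k / t \<le> L * M / t" using that L tpos by (simp add: divide_right_mono)
    also have "\<dots> \<le> \<epsilon> / 2" using M_upper L tpos by (simp add: field_simps)
    finally have "\<epsilon> / 2 \<le> \<bar>f (t + k)\<bar>" using drift[of k] by linarith
    then have "(\<epsilon> / 2)\<^sup>2 \<le> (f (t + k))\<^sup>2"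
      using \<epsilon> by (metis power2_abs half_gt_zero power_mono less_imp_le)
    moreover have "real t + k \<le> t + M" using that by simp
    ultimately show ?thesis using tpos by (intro frac_le) auto
  qed
  have "\<epsilon> ^ 3 / (4 * (2 * L + \<epsilon>)) \<le> (M + 1) * \<epsilon>\<^sup>2 / (4 * (t + M))"
  proof -
    have "\<epsilon> * (t + M) \<le> (M + 1) * (2 * L + \<epsilon>)"
      using M_lower L \<epsilon> by (simp add: field_simps)
    then have "\<epsilon>\<^sup>2 * (\<epsilon> * (t + M)) \<le> \<epsilon>\<^sup>2 * ((M + 1) * (2 * L + \<epsilon>))"
      by (intro mult_left_mono) auto
    then show ?thesis using tpos L \<epsilon> by (simp add: field_simps power2_eq_square power3_eq_cube)
  qed
  also have "\<dots> = (\<Sum>k<Suc M. (\<epsilon> / 2)\<^sup>2 / (t + M))" by (simp add: power_divide)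
  also have "\<dots> \<le> (\<Sum>k<Suc M. (f (t + k))\<^sup>2 / (t + k))" using term_ge by (intro sum_mono) auto
  finally show ?thesis by blast
qed

lemma LIMSEQ_zero_if_summable_slowly_varying:
  fixes f :: "nat \<Rightarrow> real"
  assumes summable: "summable (\<lambda>t. (f t)\<^sup>2 / t)"
    and slow: "\<And>t. t \<ge> T \<Longrightarrow> \<bar>f (Suc t) - f t\<bar> \<le> L / t"
  shows "f \<longlonglongrightarrow> 0"
proof (rule LIMSEQ_I)
  fix \<epsilon> :: real assume \<epsilon>: "\<epsilon> > 0"
  define L' where "L' = max L 1"
  have L': "L' > 0" by (simp add: L'_def)
  define \<kappa> where "\<kappa> = \<epsilon> ^ 3 / (4 * (2 * L' + \<epsilon>))"
  have "\<kappa> > 0" using \<epsilon> L' by (simp add: \<kappa>_def)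
  then obtain N0 where N0: "\<And>m n. m \<ge> N0 \<Longrightarrow> norm (\<Sum>s=m..<n. (f s)\<^sup>2 / s) < \<kappa>"
    using summable unfolding summable_Cauchy by meson
  have "\<bar>f t\<bar> < \<epsilon>" if t: "t \<ge> max (max T N0) 1" for t
  proof (rule ccontr)
    assume "\<not> \<bar>f t\<bar> < \<epsilon>"
    moreover have "\<bar>f (Suc s) - f s\<bar> \<le> L' / s" if "s \<ge> t" for s
    proof -
      have "L / s \<le> L' / s" by (simp add: L'_def divide_right_mono)
      moreover have "s \<ge> T" using that t by simp
      ultimately show ?thesis using slow[of s] by simp
    qed
    ultimately obtain M where "\<kappa> \<le> (\<Sum>k<M. (f (t + k))\<^sup>2 / real (t + k))"
      using window_sum_ge_if_slowly_varying[of t f L' \<epsilon>] t L' \<epsilon> unfolding \<kappa>_def by force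
    also have "\<dots> = (\<Sum>s=t..<M + t. (f s)\<^sup>2 / s)"
      using sum.shift_bounds_nat_ivl[of "\<lambda>s. (f s)\<^sup>2 / s" 0 t M]
      by (simp add: atLeast0LessThan add.commute)
    finally show False using N0[of t "M + t"] t by simp
  qed
  then show "\<exists>no. \<forall>t\<ge>no. norm (f t - 0) < \<epsilon>" by (metis real_norm_def diff_zero)
qed

lemma norm_sgn_diff_le:
  fixes x y :: "'a::real_normed_vector"
  assumes "x \<noteq> 0"
  shows "norm (sgn x - sgn y) \<le> 2 * norm (x - y) / norm x"
proof (cases "y = 0")
  case True
  then show ?thesis using assms by (simp add: norm_sgn)
next
  case False
  have "sgn x - sgn y = (1 / norm x) *\<^sub>R (x - y) + (1 / norm x - 1 / norm y) *\<^sub>R y"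
    by (simp add: sgn_div_norm divide_inverse algebra_simps)
  then have "norm (sgn x - sgn y)
      \<le> norm ((1 / norm x) *\<^sub>R (x - y)) + norm ((1 / norm x - 1 / norm y) *\<^sub>R y)"
    by (metis norm_triangle_ineq)
  also have "norm ((1 / norm x - 1 / norm y) *\<^sub>R y) = \<bar>norm y - norm x\<bar> / norm x"
    using False assms by (simp add: field_simps abs_mult)
  also have "norm ((1 / norm x) *\<^sub>R (x - y)) = norm (x - y) / norm x" by simp
  also have "\<bar>norm y - norm x\<bar> \<le> norm (x - y)"
    by (metis abs_minus_commute norm_triangle_ineq3)
  finally show ?thesis by (simp add: divide_right_mono add_divide_distrib[symmetric])
qed

lemma norm_sgn_minus_unit_le:
  fixes x u :: "'a::real_normed_vector"
  assumes u: "norm u = 1" and x: "x \<noteq> 0" and \<mu>: "\<mu> \<ge> 0"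
  shows "norm (sgn x - u) \<le> 2 * norm (x - \<mu> *\<^sub>R u) / norm x"
proof (cases "\<mu> = 0")
  case True
  have "norm (sgn x - u) \<le> norm (sgn x) + norm u" by (rule norm_triangle_ineq4)
  then show ?thesis using True x u by (simp add: norm_sgn)
next
  case False
  have "sgn (\<mu> *\<^sub>R u) = u" using False \<mu> u by (simp add: sgn_scaleR sgn_div_norm)
  then show ?thesis using norm_sgn_diff_le[OF x, of "\<mu> *\<^sub>R u"] by simp
qed

(* A move by s u towards the unit vector u raises the cosine with u only to second order in
   norm (u - sgn x). *)
lemma inner_sgn_shift_le:
  fixes x u e :: "'a::real_inner"
  assumes u: "norm u = 1" and x: "x \<noteq> 0" and s: "s \<ge> 0" and v: "x + s *\<^sub>R u \<noteq> 0"
  shows "sgn (x + s *\<^sub>R u + e) \<bullet> u - sgn x \<bullet> u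
    \<le> norm (sgn (x + s *\<^sub>R u + e) - sgn (x + s *\<^sub>R u)) * norm (u - sgn x)
       + s * (norm (u - sgn x))\<^sup>2 / norm (x + s *\<^sub>R u)"
proof -
  define v where "v = x + s *\<^sub>R u"
  define a where "a = sgn x"
  define a' where "a' = sgn (v + e)"
  define c where "c = a \<bullet> u"
  have aa: "a \<bullet> a = 1" and uu: "u \<bullet> u = 1"
    using x u by (simp_all add: a_def dot_square_norm norm_sgn)
  have "a' \<bullet> a \<le> norm a' * norm a" by (rule norm_cauchy_schwarz)
  also have "\<dots> \<le> 1" using x by (simp add: a_def a'_def norm_sgn)
  finally have "a' \<bullet> u - a \<bullet> u \<le> (a' - sgn v) \<bullet> (u - a) + (sgn v - a) \<bullet> (u - a)"
    using aa by (simp add: inner_diff_left inner_diff_right inner_commute)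
  moreover have "(a' - sgn v) \<bullet> (u - a) \<le> norm (a' - sgn v) * norm (u - a)"
    by (rule norm_cauchy_schwarz)
  moreover have "(sgn v - a) \<bullet> (u - a) = (1 - c) * (s - norm x + norm v) / norm v"
  proof -
    have "x = norm x *\<^sub>R a" using x by (simp add: a_def sgn_div_norm)
    then have "x \<bullet> (u - a) = norm x * (c - 1)"
      by (metis aa c_def inner_diff_right inner_scaleR_left mult.right_neutral)
    moreover have "u \<bullet> (u - a) = 1 - c" by (simp add: inner_diff_right uu c_def inner_commute)
    ultimately have "v \<bullet> (u - a) = norm x * (c - 1) + s * (1 - c)"
      by (simp add: v_def inner_add_left)
    then have "sgn v \<bullet> (u - a) = (norm x * (c - 1) + s * (1 - c)) / norm v"
      by (simp add: sgn_div_norm divide_inverse_commute)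
    moreover have "a \<bullet> (u - a) = c - 1" by (simp add: inner_diff_right aa c_def)
    ultimately have "(sgn v - a) \<bullet> (u - a) = (norm x * (c - 1) + s * (1 - c)) / norm v - (c - 1)"
      by (simp only: inner_diff_left)
    also have "\<dots> = (1 - c) * (s - norm x + norm v) / norm v"
      using v unfolding v_def[symmetric] by (simp add: field_simps)
    finally show ?thesis .
  qed
  moreover have "(1 - c) * (s - norm x + norm v) / norm v \<le> s * (norm (u - a))\<^sup>2 / norm v"
  proof (rule divide_right_mono)
    have "s - norm x + norm v \<le> 2 * s"
      using norm_triangle_ineq[of x "s *\<^sub>R u"] u s by (simp add: v_def)
    moreover have "0 \<le> 1 - c"
      using norm_cauchy_schwarz[of a u] x u by (simp add: c_def a_def norm_sgn)
    ultimately have "(1 - c) * (s - norm x + norm v) \<le> (1 - c) * (2 * s)" by (rule mult_left_mono)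
    also have "\<dots> = s * (norm (u - a))\<^sup>2"
      using aa uu
      by (simp add: power2_norm_eq_inner inner_diff_left inner_diff_right c_def inner_commute)
    finally show "(1 - c) * (s - norm x + norm v) \<le> s * (norm (u - a))\<^sup>2" .
  qed simp
  ultimately show ?thesis
    unfolding a'_def v_def[symmetric] a_def[symmetric] by linarith
qed

lemma inner_sgn_shift_bound:
  fixes x u e :: "'a::real_inner"
  assumes u: "norm u = 1" and x: "x \<noteq> 0" and s: "s \<ge> 0" and v: "x + s *\<^sub>R u \<noteq> 0"
    and \<mu>: "\<mu> \<ge> 0"
  shows "sgn (x + s *\<^sub>R u + e) \<bullet> u - sgn x \<bullet> u
    \<le> 4 * norm (x - \<mu> *\<^sub>R u) * (norm e + s * norm (x - \<mu> *\<^sub>R u) / norm x)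
       / (norm x * norm (x + s *\<^sub>R u))"
proof -
  define v where "v = x + s *\<^sub>R u"
  define b where "b = norm (x - \<mu> *\<^sub>R u)"
  define X where "X = norm (u - sgn x)"
  have X: "X \<le> 2 * b / norm x"
    using norm_sgn_minus_unit_le[OF u x \<mu>] by (simp add: X_def b_def norm_minus_commute)
  have Y: "norm (sgn (v + e) - sgn v) \<le> 2 * norm e / norm v"
    using norm_sgn_diff_le[OF v, of "v + e"] by (simp add: v_def norm_minus_commute)
  have "sgn (v + e) \<bullet> u - sgn x \<bullet> u \<le> norm (sgn (v + e) - sgn v) * X + s * X\<^sup>2 / norm v"
    using inner_sgn_shift_le[OF u x s v] by (simp add: v_def X_def)
  also have "norm (sgn (v + e) - sgn v) * X \<le> (2 * norm e / norm v) * (2 * b / norm x)"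
    using X Y by (intro mult_mono) (auto simp: X_def b_def)
  also have "s * X\<^sup>2 / norm v \<le> s * (2 * b / norm x)\<^sup>2 / norm v"
    using X s by (intro divide_right_mono mult_left_mono power_mono) (auto simp: X_def)
  also have "(2 * norm e / norm v) * (2 * b / norm x) + s * (2 * b / norm x)\<^sup>2 / norm v
      = 4 * b * (norm e + s * b / norm x) / (norm x * norm v)"
    using x v by (simp add: v_def field_simps power2_eq_square)
  finally show ?thesis by (simp add: v_def b_def)
qed

lemma half_le_norm_scaleR_add:
  fixes v r :: "'a::real_normed_vector"
  assumes "norm r \<le> B" "2 * B \<le> c * norm v" "0 \<le> c"
  shows "c * norm v / 2 \<le> norm (c *\<^sub>R v + r)"
proof -
  have "norm (c *\<^sub>R v) - norm r \<le> norm (c *\<^sub>R v + r)" by (metis norm_diff_ineq)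
  then show ?thesis using assms by simp
qed

lemma inner_sgn_log_step_le:
  fixes wh r g :: "'a::real_inner"
  assumes wh: "wh \<noteq> 0" and r: "norm r \<le> B" and l: "l > 0" "2 * B \<le> l * norm wh" and t: "t > 0"
  shows "sgn (l *\<^sub>R wh + r + (1 / t) *\<^sub>R (wh + g)) \<bullet> sgn wh - sgn (l *\<^sub>R wh + r) \<bullet> sgn wh
    \<le> 8 * B * (norm g + 2 * B / l) / (t * l * norm wh * norm (l *\<^sub>R wh + r))"
proof -
  define h where "h = norm wh"
  define u where "u = sgn wh"
  define W where "W = l *\<^sub>R wh + r"
  define v where "v = W + (h / t) *\<^sub>R u"
  have h: "h > 0" and u: "norm u = 1" and wh_eq: "wh = h *\<^sub>R u"
    using wh by (simp_all add: h_def u_def norm_sgn sgn_div_norm)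
  have lh: "l * h > 0" using l h by simp
  have B: "0 \<le> B" using r norm_ge_zero order_trans by blast
  have W: "l * h / 2 \<le> norm W"
    using half_le_norm_scaleR_add[OF r l(2)] l by (simp add: W_def h_def)
  have lt: "l * h \<le> (l + 1 / t) * h" using h t by (intro mult_right_mono) auto
  have "(h / t) *\<^sub>R u = (1 / t) *\<^sub>R wh" by (simp add: wh_eq)
  then have "v = (l + 1 / t) *\<^sub>R wh + r" by (simp add: v_def W_def scaleR_add_left)
  then have "(l + 1 / t) * h / 2 \<le> norm v"
    using half_le_norm_scaleR_add[OF r, of "l + 1 / t" wh] lt l(2) l(1) t by (simp add: h_def)
  then have v: "l * h / 2 \<le> norm v" using divide_right_mono[OF lt, of 2] by linarith
  have W0: "W \<noteq> 0" and v0: "v \<noteq> 0" using W v lh by auto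
  have "sgn (v + (1 / t) *\<^sub>R g) \<bullet> u - sgn W \<bullet> u
      \<le> 4 * norm r * (norm ((1 / t) *\<^sub>R g) + (h / t) * (norm r / norm W)) / (norm W * norm v)"
    using inner_sgn_shift_bound[OF u W0 _ _, of "h / t" "l * h" "(1 / t) *\<^sub>R g"] h t v0 lh
    by (simp add: v_def W_def wh_eq)
  also have "\<dots> \<le> 4 * B * (norm g / t + (h / t) * (B / (l * h / 2))) / (norm W * (l * h / 2))"
  proof (rule frac_le)
    have "norm r / norm W \<le> B / (l * h / 2)"
      using r W lh B by (intro frac_le) auto
    then have "norm ((1 / t) *\<^sub>R g) + (h / t) * (norm r / norm W)
        \<le> norm g / t + (h / t) * (B / (l * h / 2))"
      using h t by (intro add_mono mult_left_mono) auto
    then show "4 * norm r * (norm ((1 / t) *\<^sub>R g) + (h / t) * (norm r / norm W))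
        \<le> 4 * B * (norm g / t + (h / t) * (B / (l * h / 2)))"
      using r B h t by (intro mult_mono) (auto intro!: add_nonneg_nonneg)
  qed (use B h t l lh W v W0 in \<open>auto intro!: mult_nonneg_nonneg add_nonneg_nonneg\<close>)
  also have "\<dots> = 8 * B * (norm g + 2 * B / l) / (t * l * h * norm W)"
    using h t l W0 by (simp add: field_simps)
  also have "v + (1 / t) *\<^sub>R g = l *\<^sub>R wh + r + (1 / t) *\<^sub>R (wh + g)"
    using h by (simp add: v_def W_def wh_eq scaleR_add_right)
  finally show ?thesis by (simp add: u_def W_def h_def)
qed

lemma gderiv_unique:
  fixes f :: "'a::real_inner \<Rightarrow> real"
  assumes "GDERIV f v :> g1" "GDERIV f v :> g2"
  shows "g1 = g2"
proof -
  have "(\<lambda>h. h \<bullet> g1) = (\<lambda>h. h \<bullet> g2)"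
    using has_derivative_unique assms unfolding gderiv_def by blast
  then have "(g1 - g2) \<bullet> (g1 - g2) = 0" by (metis inner_diff_right right_minus_eq)
  then show ?thesis by simp
qed

lemma logistic_loss_deriv: "DERIV logistic_loss u :> - (1 / (1 + exp u))"
proof -
  have "DERIV (\<lambda>u. ln (1 + exp (- u))) u :> (1 / (1 + exp (- u))) * (exp (- u) * (- 1))"
    by (rule derivative_eq_intros | simp add: add_pos_pos)+
  moreover have "(1 / (1 + exp (- u))) * (exp (- u) * (- 1)) = - (1 / (1 + exp u))"
    by (simp add: exp_minus field_simps)
  ultimately show ?thesis unfolding logistic_loss_def[abs_def] by simp
qed

lemma emp_loss_gderiv:
  fixes x :: "nat \<Rightarrow> real ^ 'n"
  shows "GDERIV (emp_loss N x y) v :>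
    (\<Sum>i<N. (- (1 / (1 + exp (v \<bullet> (y i *\<^sub>R x i))))) *\<^sub>R (y i *\<^sub>R x i))"
proof -
  have "GDERIV (\<lambda>v. logistic_loss (v \<bullet> (y i *\<^sub>R x i))) v :>
      (- (1 / (1 + exp (v \<bullet> (y i *\<^sub>R x i))))) *\<^sub>R (y i *\<^sub>R x i)" for i
  proof (rule GDERIV_DERIV_compose[OF _ logistic_loss_deriv])
    show "GDERIV (\<lambda>v. v \<bullet> (y i *\<^sub>R x i)) v :> y i *\<^sub>R x i"
      unfolding gderiv_def by (auto intro!: derivative_eq_intros)
  qed
  then have "FDERIV (\<lambda>v. \<Sum>i<N. logistic_loss (v \<bullet> (y i *\<^sub>R x i))) v :>
      (\<lambda>h. \<Sum>i<N. h \<bullet> ((- (1 / (1 + exp (v \<bullet> (y i *\<^sub>R x i))))) *\<^sub>R (y i *\<^sub>R x i)))"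
    unfolding gderiv_def by (intro has_derivative_sum) auto
  then show ?thesis
    unfolding gderiv_def emp_loss_def[abs_def] by (simp add: inner_sum_right mult.commute)
qed

lemma logistic_gd_step:
  fixes x :: "nat \<Rightarrow> real ^ 'n"
  assumes "GDERIV (emp_loss N x y) v :> g"
  shows "v - \<eta> *\<^sub>R g = v + \<eta> *\<^sub>R (\<Sum>i<N. (1 / (1 + exp (v \<bullet> (y i *\<^sub>R x i)))) *\<^sub>R (y i *\<^sub>R x i))"
  using gderiv_unique[OF assms emp_loss_gderiv] by (simp add: sum_negf)

locale logistic_gd =
  fixes N :: nat and z :: "nat \<Rightarrow> 'a::real_inner" and R \<eta> B :: real and wh :: 'a
    and w \<rho> :: "nat \<Rightarrow> 'a"
  assumes eta_pos: "\<eta> > 0"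
    and norm_z_le: "\<And>i. i < N \<Longrightarrow> norm (z i) \<le> R"
    and margin: "\<And>i. i < N \<Longrightarrow> 1 \<le> wh \<bullet> z i"
    and gd_step: "\<And>t. w (Suc t) = w t + \<eta> *\<^sub>R (\<Sum>i<N. (1 / (1 + exp (w t \<bullet> z i))) *\<^sub>R z i)"
    and decomp: "\<And>t. t \<ge> 1 \<Longrightarrow> w t = ln (real t) *\<^sub>R wh + \<rho> t"
    and rho_bound: "\<And>t. t \<ge> 1 \<Longrightarrow> norm (\<rho> t) \<le> B"
begin

definition weight :: "nat \<Rightarrow> 'a \<Rightarrow> nat \<Rightarrow> real" where
  "weight t r i = exp ((1 - wh \<bullet> z i) * ln (real t) - r \<bullet> z i)"

definition potential :: "nat \<Rightarrow> 'a \<Rightarrow> real" where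
  "potential t r = \<eta> * (\<Sum>i<N. weight t r i) + wh \<bullet> r"

definition potential_grad :: "nat \<Rightarrow> 'a \<Rightarrow> 'a" where
  "potential_grad t r = wh - \<eta> *\<^sub>R (\<Sum>i<N. weight t r i *\<^sub>R z i)"

lemma B_nonneg: "0 \<le> B"
  using rho_bound[of 1] norm_ge_zero order_trans by blast

lemma abs_inner_z_le:
  assumes "i < N"
  shows "\<bar>r \<bullet> z i\<bar> \<le> norm r * R"
  using Cauchy_Schwarz_ineq2[of r "z i"] norm_z_le[OF assms]
  by (meson mult_left_mono norm_ge_zero order_trans)

lemma weight_pos: "0 < weight t r i"
  by (simp add: weight_def)

lemma weight_exponent_le:
  assumes "t \<ge> 1" "norm r \<le> B" "i < N"
  shows "(1 - wh \<bullet> z i) * ln (real t) - r \<bullet> z i \<le> B * R"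
proof -
  have "(1 - wh \<bullet> z i) * ln (real t) \<le> 0"
    using margin[OF assms(3)] assms(1) by (intro mult_nonpos_nonneg) auto
  moreover have "norm r * R \<le> B * R"
    using assms(2) norm_z_le[OF assms(3)] by (meson mult_right_mono norm_ge_zero order_trans)
  ultimately show ?thesis using abs_inner_z_le[OF assms(3), of r] by linarith
qed

lemma weight_le:
  assumes "t \<ge> 1" "norm r \<le> B" "i < N"
  shows "weight t r i \<le> exp (B * R)"
  using weight_exponent_le[OF assms] by (simp add: weight_def)

lemma weight_trajectory:
  assumes "t \<ge> 1"
  shows "weight t (\<rho> t) i = t * exp (- (w t \<bullet> z i))"
proof -
  have "(1 - wh \<bullet> z i) * ln (real t) - \<rho> t \<bullet> z i = ln (real t) - w t \<bullet> z i"
    using decomp[OF assms] by (simp add: inner_add_left algebra_simps)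
  then have "weight t (\<rho> t) i = exp (ln (real t) - w t \<bullet> z i)" by (simp add: weight_def)
  also have "\<dots> = t * exp (- (w t \<bullet> z i))" using assms by (simp add: exp_diff exp_minus field_simps)
  finally show ?thesis .
qed

lemma weight_antimono:
  assumes "t \<ge> 1" "i < N"
  shows "weight (Suc t) r i \<le> weight t r i"
proof -
  have "(1 - wh \<bullet> z i) * ln (real (Suc t)) \<le> (1 - wh \<bullet> z i) * ln (real t)"
    using margin[OF assms(2)] assms(1) by (intro mult_left_mono_neg) auto
  then show ?thesis by (simp add: weight_def)
qed

lemma norm_weighted_sum_le:
  fixes c :: real
  assumes "\<And>i. i < N \<Longrightarrow> \<bar>a i\<bar> \<le> c"
  shows "norm (\<Sum>i<N. a i *\<^sub>R z i) \<le> N * c * R"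
proof -
  have "norm (\<Sum>i<N. a i *\<^sub>R z i) \<le> (\<Sum>i<N. \<bar>a i\<bar> * norm (z i))"
    using norm_sum[of "\<lambda>i. a i *\<^sub>R z i" "{..<N}"] by simp
  also have "\<dots> \<le> (\<Sum>i<N. c * R)"
    using assms norm_z_le by (intro sum_mono mult_mono) (auto intro: order_trans[OF abs_ge_zero])
  finally show ?thesis by simp
qed

lemma norm_potential_grad_le:
  assumes "t \<ge> 1" "norm r \<le> B"
  shows "norm (potential_grad t r) \<le> norm wh + \<eta> * (N * exp (B * R) * R)"
proof -
  have "norm (\<Sum>i<N. weight t r i *\<^sub>R z i) \<le> N * exp (B * R) * R"
    using weight_le[OF assms] weight_pos by (intro norm_weighted_sum_le) (simp add: less_imp_le)
  then show ?thesis
    unfolding potential_grad_def using eta_pos norm_triangle_ineq4[of wh]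
    by (smt (verit) mult_left_mono norm_scaleR)
qed

lemma scaled_step_approx:
  assumes "t \<ge> 1"
  shows "norm (real t *\<^sub>R (w (Suc t) - w t) - (wh - potential_grad t (\<rho> t)))
    \<le> \<eta> * N * (exp (B * R))\<^sup>2 * R / t"
proof -
  define s where "s i = w t \<bullet> z i" for i
  have "real t *\<^sub>R (w (Suc t) - w t) - (wh - potential_grad t (\<rho> t))
      = \<eta> *\<^sub>R (\<Sum>i<N. (t * (1 / (1 + exp (s i)) - exp (- s i))) *\<^sub>R z i)"
    using weight_trajectory[OF assms]
    by (simp add: gd_step potential_grad_def s_def scaleR_sum_right algebra_simps
        flip: sum_subtractf scaleR_diff_left)
  moreover have "\<bar>t * (1 / (1 + exp (s i)) - exp (- s i))\<bar> \<le> (exp (B * R))\<^sup>2 / t" if "i < N" for i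
  proof -
    have "\<bar>t * (1 / (1 + exp (s i)) - exp (- s i))\<bar> \<le> t * (exp (- s i))\<^sup>2"
      using logistic_tail_approx[of "s i"] by (simp add: abs_mult mult_left_mono)
    also have "\<dots> = (weight t (\<rho> t) i)\<^sup>2 / t"
      using weight_trajectory[OF assms] assms by (simp add: s_def power2_eq_square)
    also have "\<dots> \<le> (exp (B * R))\<^sup>2 / t"
      using weight_le[OF assms rho_bound[OF assms] that] weight_pos
      by (intro divide_right_mono power_mono) (auto simp: less_imp_le)
    finally show ?thesis .
  qed
  then have "norm (\<Sum>i<N. (t * (1 / (1 + exp (s i)) - exp (- s i))) *\<^sub>R z i)
      \<le> N * ((exp (B * R))\<^sup>2 / t) * R"
    by (rule norm_weighted_sum_le)
  then have "\<eta> * norm (\<Sum>i<N. (t * (1 / (1 + exp (s i)) - exp (- s i))) *\<^sub>R z i)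
      \<le> \<eta> * (N * ((exp (B * R))\<^sup>2 / t) * R)"
    using eta_pos by (intro mult_left_mono) auto
  ultimately show ?thesis using eta_pos by (simp add: mult.assoc)
qed

lemma rho_step_approx:
  assumes "t \<ge> 1"
  shows "norm (real t *\<^sub>R (\<rho> (Suc t) - \<rho> t) + potential_grad t (\<rho> t))
    \<le> (\<eta> * N * (exp (B * R))\<^sup>2 * R + norm wh) / t"
proof -
  define d where "d = ln (real t + 1) - ln (real t)"
  have t: "real t > 0" using assms by simp
  have "real t *\<^sub>R (\<rho> (Suc t) - \<rho> t) + potential_grad t (\<rho> t)
      = (real t *\<^sub>R (w (Suc t) - w t) - (wh - potential_grad t (\<rho> t))) + (1 - t * d) *\<^sub>R wh"
    using decomp[OF assms] decomp[of "Suc t"] by (simp add: d_def algebra_simps)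
  moreover have "\<bar>1 - t * d\<bar> \<le> 1 / t"
  proof -
    have "1 / (real t + 1) \<le> d" "d \<le> 1 / t" unfolding d_def by (rule ln_add_one_diff_bounds[OF t])+
    then have "t * (1 / (real t + 1)) \<le> t * d" "t * d \<le> t * (1 / t)"
      by (intro mult_left_mono; simp)+
    moreover have "1 - t * (1 / (real t + 1)) \<le> 1 / t" "t * (1 / t) = 1"
      using t by (simp_all add: field_simps)
    ultimately show ?thesis by linarith
  qed
  then have "\<bar>1 - t * d\<bar> * norm wh \<le> 1 / t * norm wh" by (rule mult_right_mono) simp
  then have "norm ((1 - t * d) *\<^sub>R wh) \<le> norm wh / t" by simp
  ultimately show ?thesis
    using scaled_step_approx[OF assms] norm_triangle_ineq
    by (smt (verit) add_divide_distrib)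
qed

lemma rho_step_bound: "\<exists>c. \<forall>t\<ge>1. norm (\<rho> (Suc t) - \<rho> t) \<le> c / t"
proof -
  define C where "C = \<eta> * N * (exp (B * R))\<^sup>2 * R + norm wh"
  define P where "P = norm wh + \<eta> * (N * exp (B * R) * R)"
  show ?thesis
  proof (intro exI[of _ "C + P"] allI impI)
    fix t :: nat assume t: "t \<ge> 1"
    have "real t * norm (\<rho> (Suc t) - \<rho> t)
        \<le> norm (real t *\<^sub>R (\<rho> (Suc t) - \<rho> t) + potential_grad t (\<rho> t))
           + norm (potential_grad t (\<rho> t))"
      by (metis add_diff_cancel_right' norm_scaleR abs_of_nat norm_triangle_ineq4)
    also have "\<dots> \<le> C / t + P"
      using rho_step_approx[OF t] norm_potential_grad_le[OF t rho_bound[OF t]]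
      by (simp add: C_def P_def)
    also have "C / t \<le> C / 1"
    proof (rule divide_left_mono)
      show "0 \<le> C"
        using t order_trans[OF norm_ge_zero rho_step_approx[OF t]]
        by (simp add: C_def zero_le_divide_iff)
    qed (use t in auto)
    finally show "norm (\<rho> (Suc t) - \<rho> t) \<le> (C + P) / t"
      using t by (simp add: field_simps)
  qed
qed

lemma potential_step_le:
  assumes t: "t \<ge> 1" and r: "norm r \<le> B" and d: "norm d * R \<le> 1"
  shows "potential t (r + d)
    \<le> potential t r + potential_grad t r \<bullet> d + \<eta> * (N * exp (B * R) * R\<^sup>2) * (norm d)\<^sup>2"
proof -
  define K where "K = exp (B * R)"
  have weight_step: "weight t (r + d) i
      \<le> weight t r i - weight t r i * (d \<bullet> z i) + K * R\<^sup>2 * (norm d)\<^sup>2"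
    if i: "i < N" for i
  proof -
    define a where "a = d \<bullet> z i"
    have a: "\<bar>a\<bar> \<le> norm d * R" unfolding a_def by (rule abs_inner_z_le[OF i])
    have "weight t (r + d) i = weight t r i * exp (- a)"
      by (simp add: weight_def a_def inner_add_left exp_diff exp_minus divide_inverse exp_add)
    also have "\<dots> \<le> weight t r i * (1 + (- a) + (- a)\<^sup>2)"
      using exp_le_quadratic[of "- a"] a d weight_pos[of t r i] by (intro mult_left_mono) auto
    also have "\<dots> = weight t r i - weight t r i * a + weight t r i * a\<^sup>2"
      by (simp add: algebra_simps)
    also have "weight t r i * a\<^sup>2 \<le> K * (norm d * R)\<^sup>2"
    proof (rule mult_mono)
      show "a\<^sup>2 \<le> (norm d * R)\<^sup>2" using a by (metis abs_ge_zero power2_abs power_mono)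
    qed (use weight_le[OF t r i] in \<open>auto simp: K_def\<close>)
    finally show ?thesis by (simp add: a_def power_mult_distrib ac_simps)
  qed
  have "(\<Sum>i<N. weight t (r + d) i)
      \<le> (\<Sum>i<N. weight t r i - weight t r i * (d \<bullet> z i) + K * R\<^sup>2 * (norm d)\<^sup>2)"
    by (rule sum_mono) (use weight_step in auto)
  also have "\<dots> = (\<Sum>i<N. weight t r i) - (\<Sum>i<N. weight t r i * (d \<bullet> z i))
      + N * (K * R\<^sup>2 * (norm d)\<^sup>2)"
    by (simp add: sum.distrib sum_subtractf)
  finally have sum_le: "(\<Sum>i<N. weight t (r + d) i)
      \<le> (\<Sum>i<N. weight t r i) - (\<Sum>i<N. weight t r i * (d \<bullet> z i)) + N * (K * R\<^sup>2 * (norm d)\<^sup>2)" .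
  have grad: "potential_grad t r \<bullet> d = wh \<bullet> d - \<eta> * (\<Sum>i<N. weight t r i * (d \<bullet> z i))"
    by (simp add: potential_grad_def inner_diff_right inner_sum_right sum_distrib_left
        inner_commute)
  have "potential t (r + d) = \<eta> * (\<Sum>i<N. weight t (r + d) i) + wh \<bullet> r + wh \<bullet> d"
    by (simp add: potential_def inner_add_right)
  also have "\<dots> \<le> \<eta> * ((\<Sum>i<N. weight t r i) - (\<Sum>i<N. weight t r i * (d \<bullet> z i))
      + N * (K * R\<^sup>2 * (norm d)\<^sup>2)) + wh \<bullet> r + wh \<bullet> d"
    using sum_le eta_pos by simp
  also have "\<dots> = potential t r + potential_grad t r \<bullet> d + \<eta> * (N * K * R\<^sup>2) * (norm d)\<^sup>2"
    by (simp add: potential_def grad algebra_simps)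
  finally show ?thesis by (simp add: K_def)
qed

lemma potential_antimono:
  assumes "t \<ge> 1"
  shows "potential (Suc t) r \<le> potential t r"
  unfolding potential_def using weight_antimono[OF assms] eta_pos
  by (auto intro!: mult_left_mono sum_mono)

lemma potential_lower_bound:
  assumes "norm r \<le> B"
  shows "- (norm wh * B) \<le> potential t r"
proof -
  have "\<bar>wh \<bullet> r\<bar> \<le> norm wh * B"
    using Cauchy_Schwarz_ineq2[of wh r] mult_left_mono[OF assms norm_ge_zero[of wh]] by linarith
  then have "- (norm wh * B) \<le> wh \<bullet> r" by (simp add: abs_le_iff)
  moreover have "0 \<le> \<eta> * (\<Sum>i<N. weight t r i)"
    using eta_pos weight_pos by (simp add: sum_nonneg less_imp_le)
  ultimately show ?thesis by (simp add: potential_def)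
qed

lemma potential_grad_inner_step_le:
  assumes t: "t \<ge> 1"
  shows "potential_grad t (\<rho> t) \<bullet> (\<rho> (Suc t) - \<rho> t)
    \<le> (norm wh + \<eta> * (N * exp (B * R) * R)) * (\<eta> * N * (exp (B * R))\<^sup>2 * R + norm wh) / (real t)\<^sup>2
       - (norm (potential_grad t (\<rho> t)))\<^sup>2 / t"
proof -
  define g where "g = potential_grad t (\<rho> t)"
  define \<delta> where "\<delta> = \<rho> (Suc t) - \<rho> t"
  define P where "P = norm wh + \<eta> * (N * exp (B * R) * R)"
  define C where "C = \<eta> * N * (exp (B * R))\<^sup>2 * R + norm wh"
  have tpos: "real t > 0" using t by simp
  have "real t * (g \<bullet> \<delta>) = g \<bullet> (real t *\<^sub>R \<delta> + g) - (norm g)\<^sup>2"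
    by (simp add: inner_add_right power2_norm_eq_inner)
  also have "g \<bullet> (real t *\<^sub>R \<delta> + g) \<le> norm g * norm (real t *\<^sub>R \<delta> + g)"
    by (rule norm_cauchy_schwarz)
  also have "\<dots> \<le> P * (C / t)"
  proof (rule mult_mono)
    show "norm g \<le> P" using norm_potential_grad_le[OF t rho_bound[OF t]] by (simp add: P_def g_def)
    then show "0 \<le> P" by (rule order_trans[OF norm_ge_zero])
    show "norm (real t *\<^sub>R \<delta> + g) \<le> C / t"
      using rho_step_approx[OF t] by (simp add: C_def \<delta>_def g_def)
  qed simp
  finally have "real t * (g \<bullet> \<delta>) / t \<le> (P * (C / t) - (norm g)\<^sup>2) / t"
    using tpos by (intro divide_right_mono) auto
  then have "g \<bullet> \<delta> \<le> (P * (C / t) - (norm g)\<^sup>2) / t" using tpos by simp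
  also have "\<dots> = P * C / (real t)\<^sup>2 - (norm g)\<^sup>2 / t"
    using tpos by (simp add: diff_divide_distrib power2_eq_square)
  finally show ?thesis by (simp add: g_def \<delta>_def P_def C_def)
qed

lemma eventually_rho_step_small: "\<forall>\<^sub>F t in sequentially. norm (\<rho> (Suc t) - \<rho> t) * R \<le> 1"
proof -
  obtain c where c: "\<And>t. t \<ge> 1 \<Longrightarrow> norm (\<rho> (Suc t) - \<rho> t) \<le> c / t"
    using rho_step_bound by blast
  have "(\<lambda>t. c * R / real t) \<longlonglongrightarrow> 0" by (rule lim_const_over_n)
  then have "\<forall>\<^sub>F t in sequentially. c * R / real t < 1" by (rule order_tendstoD) simp
  then show ?thesis using eventually_ge_at_top[of 1]
  proof eventually_elim
    case (elim t)
    show ?case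
    proof (cases "R \<ge> 0")
      case True
      have "norm (\<rho> (Suc t) - \<rho> t) * R \<le> c / t * R"
        using c[OF elim(2)] True by (rule mult_right_mono)
      then show ?thesis using elim(1) by simp
    qed (use mult_nonneg_nonpos[of "norm (\<rho> (Suc t) - \<rho> t)" R] in auto)
  qed
qed

lemma potential_descent:
  "\<exists>c. \<forall>\<^sub>F t in sequentially. potential t (\<rho> (Suc t))
     \<le> potential t (\<rho> t) - (norm (potential_grad t (\<rho> t)))\<^sup>2 / t + c / (real t)\<^sup>2"
proof -
  obtain c2 where c2: "\<And>t. t \<ge> 1 \<Longrightarrow> norm (\<rho> (Suc t) - \<rho> t) \<le> c2 / t"
    using rho_step_bound by blast
  define c1 where
    "c1 = (norm wh + \<eta> * (N * exp (B * R) * R)) * (\<eta> * N * (exp (B * R))\<^sup>2 * R + norm wh)"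
  define Q where "Q = \<eta> * (N * exp (B * R) * R\<^sup>2)"
  have "\<forall>\<^sub>F t in sequentially. potential t (\<rho> (Suc t))
     \<le> potential t (\<rho> t) - (norm (potential_grad t (\<rho> t)))\<^sup>2 / t + (c1 + Q * c2\<^sup>2) / (real t)\<^sup>2"
    using eventually_rho_step_small eventually_ge_at_top[of 1]
  proof eventually_elim
    case (elim t)
    have "potential t (\<rho> (Suc t)) \<le> potential t (\<rho> t) + potential_grad t (\<rho> t) \<bullet> (\<rho> (Suc t) - \<rho> t)
        + Q * (norm (\<rho> (Suc t) - \<rho> t))\<^sup>2"
      using potential_step_le[OF elim(2) rho_bound[OF elim(2)] elim(1)] by (simp add: Q_def)
    moreover have "Q * (norm (\<rho> (Suc t) - \<rho> t))\<^sup>2 \<le> Q * (c2 / t)\<^sup>2"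
      using c2[OF elim(2)] eta_pos by (intro mult_left_mono power_mono) (auto simp: Q_def)
    moreover have "(c1 + Q * c2\<^sup>2) / (real t)\<^sup>2 = c1 / (real t)\<^sup>2 + Q * (c2 / t)\<^sup>2"
      by (simp add: power_divide add_divide_distrib)
    ultimately show ?case
      using potential_grad_inner_step_le[OF elim(2)] unfolding c1_def by linarith
  qed
  then show ?thesis by blast
qed

lemma summable_potential_grad: "summable (\<lambda>t. (norm (potential_grad t (\<rho> t)))\<^sup>2 / t)"
proof -
  obtain c T where descent: "\<forall>t\<ge>T. potential t (\<rho> (Suc t))
      \<le> potential t (\<rho> t) - (norm (potential_grad t (\<rho> t)))\<^sup>2 / t + c / (real t)\<^sup>2"
    using potential_descent unfolding eventually_sequentially by blast
  define V where "V t = potential t (\<rho> t) + \<bar>c\<bar> / (real t - 1)" for t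
  show ?thesis
  proof (rule summable_if_descent)
    fix t assume tT: "max T 2 \<le> t"
    then have t: "t \<ge> 1" and t2: "real t \<ge> 2" and "t \<ge> T" by auto
    have "1 / (real t)\<^sup>2 + 1 / t \<le> 1 / (real t - 1)"
      using t2 by (simp add: field_simps power2_eq_square)
    then have "\<bar>c\<bar> * (1 / (real t)\<^sup>2 + 1 / t) \<le> \<bar>c\<bar> * (1 / (real t - 1))"
      by (rule mult_left_mono) simp
    moreover have "c / (real t)\<^sup>2 \<le> \<bar>c\<bar> / (real t)\<^sup>2" by (simp add: divide_right_mono)
    ultimately have c: "c / (real t)\<^sup>2 + \<bar>c\<bar> / t \<le> \<bar>c\<bar> / (real t - 1)"
      by (simp add: distrib_left)
    have "V (Suc t) = potential (Suc t) (\<rho> (Suc t)) + \<bar>c\<bar> / t" by (simp add: V_def)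
    also have "\<dots> \<le> potential t (\<rho> (Suc t)) + \<bar>c\<bar> / t"
      using potential_antimono[OF t] by simp
    also have "\<dots> \<le> V t - (norm (potential_grad t (\<rho> t)))\<^sup>2 / t"
      using descent \<open>t \<ge> T\<close> c unfolding V_def by auto
    finally show "V (Suc t) \<le> V t - (norm (potential_grad t (\<rho> t)))\<^sup>2 / t" .
    have "0 \<le> \<bar>c\<bar> / (real t - 1)" using t2 by simp
    then show "- (norm wh * B) \<le> V t"
      using potential_lower_bound[OF rho_bound[OF t], of t] unfolding V_def by linarith
  next
    show "0 \<le> (norm (potential_grad t (\<rho> t)))\<^sup>2 / t" for t by simp
  qed
qed

lemma weight_variation:
  "\<exists>D. \<forall>t\<ge>1. \<forall>i<N. \<bar>weight t (\<rho> t) i - weight (Suc t) (\<rho> (Suc t)) i\<bar> \<le> D / t"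
proof -
  obtain c where c: "\<And>t. t \<ge> 1 \<Longrightarrow> norm (\<rho> (Suc t) - \<rho> t) \<le> c / t"
    using rho_step_bound by blast
  define D where "D = exp (B * R) * (norm wh * R + c * R)"
  have "\<bar>weight t (\<rho> t) i - weight (Suc t) (\<rho> (Suc t)) i\<bar> \<le> D / t"
    if t: "t \<ge> 1" and i: "i < N" for t i
  proof -
    define m where "m = wh \<bullet> z i"
    define dl where "dl = ln (real t + 1) - ln (real t)"
    have t': "Suc t \<ge> 1" by simp
    have R: "0 \<le> R" using norm_z_le[OF i] norm_ge_zero order_trans by blast
    have dl: "0 \<le> dl" "dl \<le> 1 / t"
      using ln_add_one_diff_bounds[of "real t"] t unfolding dl_def
      by (auto intro: order_trans[rotated])
    have "\<bar>weight t (\<rho> t) i - weight (Suc t) (\<rho> (Suc t)) i\<bar>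
        \<le> exp (B * R) * \<bar>((1 - m) * ln (real t) - \<rho> t \<bullet> z i)
                        - ((1 - m) * ln (real (Suc t)) - \<rho> (Suc t) \<bullet> z i)\<bar>"
      unfolding weight_def m_def
      by (intro abs_exp_diff_le weight_exponent_le[OF t rho_bound[OF t] i]
          weight_exponent_le[OF t' rho_bound[OF t'] i])
    also have "((1 - m) * ln (real t) - \<rho> t \<bullet> z i) - ((1 - m) * ln (real (Suc t)) - \<rho> (Suc t) \<bullet> z i)
        = (m - 1) * dl + (\<rho> (Suc t) - \<rho> t) \<bullet> z i"
      by (simp add: dl_def inner_diff_left algebra_simps)
    also have "\<bar>(m - 1) * dl + (\<rho> (Suc t) - \<rho> t) \<bullet> z i\<bar> \<le> norm wh * R / t + c / t * R"
    proof -
      have "1 \<le> m" "m \<le> norm wh * R"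
        using margin[OF i] abs_inner_z_le[OF i, of wh] by (auto simp: m_def)
      then have "(m - 1) * dl \<le> norm wh * R * (1 / t)"
        using dl by (intro mult_mono) auto
      then have "\<bar>(m - 1) * dl\<bar> \<le> norm wh * R * (1 / t)"
        using \<open>1 \<le> m\<close> dl by (simp add: abs_mult)
      moreover have "\<bar>(\<rho> (Suc t) - \<rho> t) \<bullet> z i\<bar> \<le> c / t * R"
        using abs_inner_z_le[OF i] mult_right_mono[OF c[OF t] R] order_trans by blast
      ultimately show ?thesis by (simp add: abs_triangle_ineq order_trans[OF abs_triangle_ineq])
    qed
    also have "exp (B * R) * (norm wh * R / t + c / t * R) = D / t"
      by (simp add: D_def algebra_simps add_divide_distrib)
    finally show ?thesis by (simp add: mult_left_mono)
  qed
  then show ?thesis by blast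
qed

lemma potential_grad_variation:
  "\<exists>L. \<forall>t\<ge>1. norm (potential_grad (Suc t) (\<rho> (Suc t)) - potential_grad t (\<rho> t)) \<le> L / t"
proof -
  obtain D where D: "\<forall>t\<ge>1. \<forall>i<N. \<bar>weight t (\<rho> t) i - weight (Suc t) (\<rho> (Suc t)) i\<bar> \<le> D / t"
    using weight_variation by blast
  show ?thesis
  proof (intro exI[of _ "\<eta> * N * D * R"] allI impI)
    fix t :: nat assume t: "t \<ge> 1"
    have "potential_grad (Suc t) (\<rho> (Suc t)) - potential_grad t (\<rho> t)
        = \<eta> *\<^sub>R (\<Sum>i<N. (weight t (\<rho> t) i - weight (Suc t) (\<rho> (Suc t)) i) *\<^sub>R z i)"
      by (simp add: potential_grad_def scaleR_diff_left sum_subtractf algebra_simps)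
    moreover have "norm (\<Sum>i<N. (weight t (\<rho> t) i - weight (Suc t) (\<rho> (Suc t)) i) *\<^sub>R z i)
        \<le> N * (D / t) * R"
      using D t by (intro norm_weighted_sum_le) auto
    then have "\<eta> * norm (\<Sum>i<N. (weight t (\<rho> t) i - weight (Suc t) (\<rho> (Suc t)) i) *\<^sub>R z i)
        \<le> \<eta> * (N * (D / t) * R)"
      using eta_pos by (intro mult_left_mono) auto
    ultimately show "norm (potential_grad (Suc t) (\<rho> (Suc t)) - potential_grad t (\<rho> t))
        \<le> \<eta> * N * D * R / t"
      using eta_pos by (simp add: mult.assoc)
  qed
qed

lemma potential_grad_LIMSEQ: "(\<lambda>t. potential_grad t (\<rho> t)) \<longlonglongrightarrow> 0"
proof -
  obtain L where
    L: "\<forall>t\<ge>1. norm (potential_grad (Suc t) (\<rho> (Suc t)) - potential_grad t (\<rho> t)) \<le> L / t"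
    using potential_grad_variation by blast
  have "(\<lambda>t. norm (potential_grad t (\<rho> t))) \<longlonglongrightarrow> 0"
  proof (rule LIMSEQ_zero_if_summable_slowly_varying[where T = 1 and L = L])
    show "summable (\<lambda>t. (norm (potential_grad t (\<rho> t)))\<^sup>2 / t)" by (rule summable_potential_grad)
    show "\<bar>norm (potential_grad (Suc t) (\<rho> (Suc t))) - norm (potential_grad t (\<rho> t))\<bar> \<le> L / t"
      if "t \<ge> 1" for t
      using norm_triangle_ineq3 L that order_trans by blast
  qed
  then show ?thesis by (simp add: tendsto_norm_zero_iff)
qed

lemma scaled_step_LIMSEQ: "(\<lambda>t. real t *\<^sub>R (w (Suc t) - w t)) \<longlonglongrightarrow> wh"
proof -
  define E where "E t = real t *\<^sub>R (w (Suc t) - w t) - (wh - potential_grad t (\<rho> t))" for t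
  have "E \<longlonglongrightarrow> 0"
  proof (rule Lim_null_comparison)
    show "\<forall>\<^sub>F t in sequentially. norm (E t) \<le> \<eta> * N * (exp (B * R))\<^sup>2 * R / t"
      unfolding eventually_sequentially E_def using scaled_step_approx by blast
    show "(\<lambda>t. \<eta> * N * (exp (B * R))\<^sup>2 * R / real t) \<longlonglongrightarrow> 0" by (rule lim_const_over_n)
  qed
  then have "(\<lambda>t. wh - potential_grad t (\<rho> t) + E t) \<longlonglongrightarrow> wh - 0 + 0"
    by (intro tendsto_intros potential_grad_LIMSEQ)
  then show ?thesis by (simp add: E_def)
qed

lemma eventually_inner_sgn_step_le:
  assumes wh: "wh \<noteq> 0" and \<kappa>: "\<kappa> > 0"
  shows "\<forall>\<^sub>F t in sequentially.
    sgn (w (Suc t)) \<bullet> sgn wh \<le> sgn (w t) \<bullet> sgn wh + \<kappa> * B / (t * ln t * norm (w t))"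
proof -
  define h where "h = norm wh"
  have h: "h > 0" using wh by (simp add: h_def)
  have "\<kappa> * h / 16 > 0" using h \<kappa> by simp
  then have "\<forall>\<^sub>F t in sequentially. dist (real t *\<^sub>R (w (Suc t) - w t)) wh < \<kappa> * h / 16"
    using scaled_step_LIMSEQ unfolding tendsto_iff by blast
  moreover have "\<forall>\<^sub>F t in sequentially. max 1 (max (2 * B / h) (32 * B / (\<kappa> * h))) \<le> ln (real t)"
    using filterlim_compose[OF ln_at_top filterlim_real_sequentially]
    unfolding filterlim_at_top by blast
  ultimately show ?thesis
  proof eventually_elim
    case (elim t)
    define l where "l = ln (real t)"
    define g where "g = real t *\<^sub>R (w (Suc t) - w t) - wh"
    have l: "1 \<le> l" "2 * B / h \<le> l" "32 * B / (\<kappa> * h) \<le> l" using elim(2) by (auto simp: l_def)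
    have t: "real t > 0" using l(1) by (auto simp: l_def intro: ccontr)
    have g: "norm g \<le> \<kappa> * h / 16" using elim(1) by (simp add: g_def dist_norm)
    have W: "w t = l *\<^sub>R wh + \<rho> t" using decomp t by (simp add: l_def)
    have W': "w (Suc t) = l *\<^sub>R wh + \<rho> t + (1 / t) *\<^sub>R (wh + g)"
      using t by (simp add: g_def W[symmetric])
    have "sgn (w (Suc t)) \<bullet> sgn wh - sgn (w t) \<bullet> sgn wh
        \<le> 8 * B * (norm g + 2 * B / l) / (t * l * h * norm (w t))"
      unfolding W' W h_def
    proof (rule inner_sgn_log_step_le[OF wh])
      show "2 * B \<le> l * norm wh" using l(2) h by (simp add: h_def field_simps)
      show "norm (\<rho> t) \<le> B" using t by (intro rho_bound) simp
    qed (use l t in auto)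
    also have "\<dots> = B * (8 * (norm g + 2 * B / l) / h) / (t * l * norm (w t))"
      using h by (simp add: field_simps)
    also have "\<dots> \<le> B * \<kappa> / (t * l * norm (w t))"
    proof (intro divide_right_mono mult_left_mono)
      have "16 * B / l \<le> \<kappa> * h / 2" using l \<kappa> h by (simp add: field_simps)
      moreover have "8 * (norm g + 2 * B / l) = 8 * norm g + 16 * B / l"
        by (simp add: algebra_simps)
      ultimately have "8 * (norm g + 2 * B / l) \<le> \<kappa> * h" using g by linarith
      then show "8 * (norm g + 2 * B / l) / h \<le> \<kappa>" using h by (simp add: pos_divide_le_eq)
    qed (use B_nonneg t l in auto)
    finally show ?case by (simp add: l_def mult.commute)
  qed
qed

end

lemma cos_angle_eq_inner_sgn: "cos_angle u v = sgn u \<bullet> sgn v"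
  by (simp add: cos_angle_def sgn_div_norm divide_inverse ac_simps)

lemma logistic_gd_emp_loss_descent:
  fixes x :: "nat \<Rightarrow> real ^ 'n"
  assumes labels: "\<forall>i<N. y i = -1 \<or> y i = 1" and bounded: "\<forall>i<N. norm (x i) < R"
    and eta_pos: "\<eta> > 0"
    and gd: "\<forall>t. \<exists>g. GDERIV (emp_loss N x y) (w t) :> g \<and> w (Suc t) = w t - \<eta> *\<^sub>R g"
    and margin: "\<forall>i<N. 1 \<le> y i * (wh \<bullet> x i)"
    and decomp: "\<forall>t\<ge>1. w t = ln (real t) *\<^sub>R wh + \<rho> t" and rho_bound: "\<forall>t\<ge>1. norm (\<rho> t) \<le> B"
  shows "logistic_gd N (\<lambda>i. y i *\<^sub>R x i) R \<eta> B wh w \<rho>"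
proof
  show "norm (y i *\<^sub>R x i) \<le> R" if "i < N" for i
    using labels bounded that by (auto simp: less_imp_le)
  show "w (Suc t)
      = w t + \<eta> *\<^sub>R (\<Sum>i<N. (1 / (1 + exp (w t \<bullet> (y i *\<^sub>R x i)))) *\<^sub>R (y i *\<^sub>R x i))"
    for t
  proof -
    obtain g where "GDERIV (emp_loss N x y) (w t) :> g" "w (Suc t) = w t - \<eta> *\<^sub>R g"
      using gd by blast
    then show ?thesis using logistic_gd_step by simp
  qed
qed (use eta_pos margin decomp rho_bound in auto)

theorem theorem5p1:
  fixes x :: "nat \<Rightarrow> real ^ 'n" and y :: "nat \<Rightarrow> real"
    and N :: nat and \<gamma> R \<eta> B :: real
    and w :: "nat \<Rightarrow> real ^ 'n" and \<rho> :: "nat \<Rightarrow> real ^ 'n" and wh :: "real ^ 'n"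
  assumes labels: "\<forall>i<N. y i = -1 \<or> y i = 1"
    and gamma_pos: "\<gamma> > 0"
    and separable: "\<exists>ws. norm ws = 1 \<and> (\<forall>i<N. y i * (ws \<bullet> x i) > \<gamma> / 2)"
    and bounded: "\<forall>i<N. norm (x i) < R"
    and eta_pos: "\<eta> > 0"
    and gd: "\<forall>t. \<exists>g. GDERIV (emp_loss N x y) (w t) :> g \<and> w (Suc t) = w t - \<eta> *\<^sub>R g"
    and svm: "is_max_margin N x y wh"
    and decomp: "\<forall>t\<ge>1. w t = ln (real t) *\<^sub>R wh + \<rho> t"
    and rho_bound: "\<forall>t\<ge>1. norm (\<rho> t) \<le> B"
  shows "\<exists>C T0. \<forall>t\<ge>T0.
     cos_angle (w (Suc t)) wh
       \<le> cos_angle (w t) wh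
          + \<eta> * N * R * exp (B * R) * B * \<gamma> / (2 * t * ln t * norm (w t))
          + 3 * \<eta> * N * R * exp (B * R) * B\<^sup>2 * \<gamma>\<^sup>2 / (8 * t * (ln t)\<^sup>2 * norm (w t))
          + C / ((real t)\<^sup>2 * (norm (w t))\<^sup>2)"
proof (cases "N = 0")
  case True
  then have "(norm wh)\<^sup>2 \<le> (norm (0 :: real ^ 'n))\<^sup>2" using svm unfolding is_max_margin_def by blast
  then show ?thesis using True by (auto simp: cos_angle_def intro!: exI[of _ "0::real"])
next
  case False
  interpret logistic_gd N "\<lambda>i. y i *\<^sub>R x i" R \<eta> B wh w \<rho>
    using svm logistic_gd_emp_loss_descent[OF labels bounded eta_pos gd _ decomp rho_bound]
    by (simp add: is_max_margin_def)
  define \<kappa> where "\<kappa> = \<eta> * N * R * exp (B * R) * \<gamma> / 2"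
  have wh: "wh \<noteq> 0" using margin[of 0] False by auto
  have R: "R > 0" using bounded[rule_format, of 0] False norm_ge_zero[of "x 0"] by linarith
  then have "\<kappa> > 0" using False eta_pos gamma_pos by (simp add: \<kappa>_def)
  then obtain T0 where T0: "\<forall>t\<ge>T0. sgn (w (Suc t)) \<bullet> sgn wh
      \<le> sgn (w t) \<bullet> sgn wh + \<kappa> * B / (real t * ln (real t) * norm (w t))"
    using eventually_inner_sgn_step_le[OF wh] unfolding eventually_sequentially by blast
  show ?thesis
  proof (intro exI[of _ "0::real"] exI[of _ T0] allI impI)
    fix t assume "T0 \<le> t"
    moreover have "\<kappa> * B / (real t * ln (real t) * norm (w t))
        = \<eta> * N * R * exp (B * R) * B * \<gamma> / (2 * real t * ln (real t) * norm (w t))"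
      by (simp add: \<kappa>_def ac_simps)
    moreover have
      "0 \<le> 3 * \<eta> * N * R * exp (B * R) * B\<^sup>2 * \<gamma>\<^sup>2 / (8 * real t * (ln (real t))\<^sup>2 * norm (w t))"
      using eta_pos R by simp
    ultimately show "cos_angle (w (Suc t)) wh
       \<le> cos_angle (w t) wh
          + \<eta> * N * R * exp (B * R) * B * \<gamma> / (2 * real t * ln (real t) * norm (w t))
          + 3 * \<eta> * N * R * exp (B * R) * B\<^sup>2 * \<gamma>\<^sup>2 / (8 * real t * (ln (real t))\<^sup>2 * norm (w t))
          + 0 / ((real t)\<^sup>2 * (norm (w t))\<^sup>2)"
      using T0 unfolding cos_angle_eq_inner_sgn by fastforce
  qed
qed

end
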